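(* For every class of closed formulas $\mathbb{P}$ and every $n$, every safety problem provable in $\mathbf{FBI}^{\mathbb{P}}_n$ is also provable in $\mathbf{F}^{\mathbb{P}_n}$, where $\mathbb{P}_n$ consists of all Boolean combinations of at most $n$ predicates from $\mathbb{P}$. Moreover, for every $n>0$ there exist a class of predicates $\mathbb{P}$ and a safety problem $\Pi$ such that $\Pi$ is provable in $\mathbf{FBI}^{\mathbb{P}}_n$ but is provable in none of $\mathbf{FBI}^{\mathbb{P}}_{n-1}$, $\mathbf{FI}^{\mathbb{P}}$, $\mathbf{F}^{\mathbb{P}}$.
   Context: A first-order vocabulary $\Sigma$ consists of constant, function and relation symbols; $\Sigma'=\{a' : a\in\Sigma\}$ is a disjoint copy, and for a formula $\varphi$ over $\Sigma$, $\varphi'$ denotes $\varphi$ with every symbol replaced by its primed copy. A safety problem is a triple $(\iota,\tau,\beta)$, where $\iota,\beta$ are closed formulas over $\Sigma$ and $\tau$ is a closed formula over $\Sigma\uplus\Sigma'$. $A\Rightarrow B$ means the implication $A\to B$ is valid. $\tau^{-1}$ denotes $\tau$ with each symbol of $\Sigma$ and its primed counterpart swapped. Proofs: a proof of $\Pi$ in a system is a finite tree whose nodes are safety problems, whose root is $\Pi$, and in which each node together with its children is an instance of one of the system's rules, with side conditions valid. Rules ($\varphi$ ranges over closed formulas over $\Sigma$): (Ind): no premises; conclusion $(\iota,\tau,\neg\varphi)$; side conditions $\iota\Rightarrow\varphi$ and $\varphi\wedge\tau\Rightarrow\varphi'$. (Cons): premise $(\iota,\tau,\neg\varphi)$; conclusion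 $(\iota,\tau,\beta)$; side condition $\varphi\Rightarrow\neg\beta$. (Inc): premises $(\iota,\tau,\neg\varphi)$ and $(\iota\wedge\varphi,\ \tau\wedge\varphi\wedge\varphi',\ \beta\wedge\varphi)$; conclusion $(\iota,\tau,\beta)$. (Rev): premise $(\beta,\tau^{-1},\iota)$; conclusion $(\iota,\tau,\beta)$. $\mathbf{F}=\{$Ind, Cons$\}$, $\mathbf{FI}=\mathbf{F}\cup\{$Inc$\}$, $\mathbf{FBI}=\mathbf{FI}\cup\{$Rev$\}$. For a class of closed formulas $\mathbb{P}$, $X^{\mathbb{P}}$ denotes system $X$ with applications of (Ind) restricted to $\varphi\in\mathbb{P}$, and $X^{\mathbb{P}}_n$ further restricts proofs to at most $n$ applications of (Ind). *)

theory Defs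
  imports Main
begin

text \<open>A symbol of the base vocabulary is a pair (name, arity); constants are
function symbols of arity 0. A symbol occurrence additionally carries a flag
saying whether it is the primed copy.\<close>

type_synonym sym = "nat \<times> nat"
type_synonym psym = "sym \<times> bool"

text \<open>A vocabulary: function (incl. constant) symbols and relation symbols.\<close>
type_synonym vocab = "sym set \<times> sym set"

datatype trm = Var nat | App psym "trm list"

datatype fm =
    FTrue | FFalse
  | Rel psym "trm list"
  | Eq trm trm
  | Not fm
  | And fm fm
  | Or fm fm
  | Imp fm fm
  | Iff fm fm
  | All nat fm
  | Ex nat fm

fun fvt :: "trm \<Rightarrow> nat set" where
  "fvt (Var x) = {x}"
| "fvt (App f ts) = (\<Union>t\<in>set ts. fvt t)"

fun fv :: "fm \<Rightarrow> nat set" where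
  "fv FTrue = {}"
| "fv FFalse = {}"
| "fv (Rel r ts) = (\<Union>t\<in>set ts. fvt t)"
| "fv (Eq s t) = fvt s \<union> fvt t"
| "fv (Not p) = fv p"
| "fv (And p q) = fv p \<union> fv q"
| "fv (Or p q) = fv p \<union> fv q"
| "fv (Imp p q) = fv p \<union> fv q"
| "fv (Iff p q) = fv p \<union> fv q"
| "fv (All x p) = fv p - {x}"
| "fv (Ex x p) = fv p - {x}"

definition closed :: "fm \<Rightarrow> bool" where
  "closed p \<longleftrightarrow> fv p = {}"

fun trm_over :: "psym set \<Rightarrow> trm \<Rightarrow> bool" where
  "trm_over A (Var x) = True"
| "trm_over A (App f ts) = (f \<in> A \<and> length ts = snd (fst f) \<and> (\<forall>t\<in>set ts. trm_over A t))"

fun fm_over :: "psym set \<Rightarrow> psym set \<Rightarrow> fm \<Rightarrow> bool" where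
  "fm_over A B FTrue = True"
| "fm_over A B FFalse = True"
| "fm_over A B (Rel r ts) = (r \<in> B \<and> length ts = snd (fst r) \<and> (\<forall>t\<in>set ts. trm_over A t))"
| "fm_over A B (Eq s t) = (trm_over A s \<and> trm_over A t)"
| "fm_over A B (Not p) = fm_over A B p"
| "fm_over A B (And p q) = (fm_over A B p \<and> fm_over A B q)"
| "fm_over A B (Or p q) = (fm_over A B p \<and> fm_over A B q)"
| "fm_over A B (Imp p q) = (fm_over A B p \<and> fm_over A B q)"
| "fm_over A B (Iff p q) = (fm_over A B p \<and> fm_over A B q)"
| "fm_over A B (All x p) = fm_over A B p"
| "fm_over A B (Ex x p) = fm_over A B p"

definition unprimed :: "sym set \<Rightarrow> psym set" where
  "unprimed S = S \<times> {False}"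

definition both :: "sym set \<Rightarrow> psym set" where
  "both S = S \<times> UNIV"

definition over :: "vocab \<Rightarrow> fm \<Rightarrow> bool" where
  "over \<Sigma> p \<longleftrightarrow> fm_over (unprimed (fst \<Sigma>)) (unprimed (snd \<Sigma>)) p"

definition over2 :: "vocab \<Rightarrow> fm \<Rightarrow> bool" where
  "over2 \<Sigma> p \<longleftrightarrow> fm_over (both (fst \<Sigma>)) (both (snd \<Sigma>)) p"

definition cfm :: "vocab \<Rightarrow> fm \<Rightarrow> bool" where
  "cfm \<Sigma> p \<longleftrightarrow> closed p \<and> over \<Sigma> p"

fun map_syms_t :: "(bool \<Rightarrow> bool) \<Rightarrow> trm \<Rightarrow> trm" where
  "map_syms_t g (Var x) = Var x"
| "map_syms_t g (App (s, b) ts) = App (s, g b) (map (map_syms_t g) ts)"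

fun map_syms :: "(bool \<Rightarrow> bool) \<Rightarrow> fm \<Rightarrow> fm" where
  "map_syms g FTrue = FTrue"
| "map_syms g FFalse = FFalse"
| "map_syms g (Rel (s, b) ts) = Rel (s, g b) (map (map_syms_t g) ts)"
| "map_syms g (Eq s t) = Eq (map_syms_t g s) (map_syms_t g t)"
| "map_syms g (Not p) = Not (map_syms g p)"
| "map_syms g (And p q) = And (map_syms g p) (map_syms g q)"
| "map_syms g (Or p q) = Or (map_syms g p) (map_syms g q)"
| "map_syms g (Imp p q) = Imp (map_syms g p) (map_syms g q)"
| "map_syms g (Iff p q) = Iff (map_syms g p) (map_syms g q)"
| "map_syms g (All x p) = All x (map_syms g p)"
| "map_syms g (Ex x p) = Ex x (map_syms g p)"

definition prime :: "fm \<Rightarrow> fm" where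
  "prime = map_syms (\<lambda>_. True)"

text \<open>\<tau>^{-1}: swap each symbol with its primed counterpart.\<close>
definition swap :: "fm \<Rightarrow> fm" where
  "swap = map_syms (\<lambda>b. \<not> b)"

text \<open>Structures have as domain a nonempty subset of nat (i.e. all countable
structures, which suffices for validity over countable vocabularies by
Loewenheim-Skolem).\<close>

datatype struc = Struc (dom: "nat set") (funs: "psym \<Rightarrow> nat list \<Rightarrow> nat")
  (rels: "psym \<Rightarrow> nat list \<Rightarrow> bool")

definition is_struc :: "struc \<Rightarrow> bool" where
  "is_struc M \<longleftrightarrow> dom M \<noteq> {} \<and>
     (\<forall>f xs. set xs \<subseteq> dom M \<longrightarrow> funs M f xs \<in> dom M)"

fun evalt :: "struc \<Rightarrow> (nat \<Rightarrow> nat) \<Rightarrow> trm \<Rightarrow> nat" where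
  "evalt M v (Var x) = v x"
| "evalt M v (App f ts) = funs M f (map (evalt M v) ts)"

fun sat :: "struc \<Rightarrow> (nat \<Rightarrow> nat) \<Rightarrow> fm \<Rightarrow> bool" where
  "sat M v FTrue = True"
| "sat M v FFalse = False"
| "sat M v (Rel r ts) = rels M r (map (evalt M v) ts)"
| "sat M v (Eq s t) = (evalt M v s = evalt M v t)"
| "sat M v (Not p) = (\<not> sat M v p)"
| "sat M v (And p q) = (sat M v p \<and> sat M v q)"
| "sat M v (Or p q) = (sat M v p \<or> sat M v q)"
| "sat M v (Imp p q) = (sat M v p \<longrightarrow> sat M v q)"
| "sat M v (Iff p q) = (sat M v p \<longleftrightarrow> sat M v q)"
| "sat M v (All x p) = (\<forall>d\<in>dom M. sat M (v(x := d)) p)"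
| "sat M v (Ex x p) = (\<exists>d\<in>dom M. sat M (v(x := d)) p)"

definition valid :: "fm \<Rightarrow> bool" where
  "valid p \<longleftrightarrow> (\<forall>M v. is_struc M \<and> range v \<subseteq> dom M \<longrightarrow> sat M v p)"

definition entails :: "fm \<Rightarrow> fm \<Rightarrow> bool" where
  "entails A B \<longleftrightarrow> valid (Imp A B)"

type_synonym prob = "fm \<times> fm \<times> fm"

definition is_problem :: "vocab \<Rightarrow> prob \<Rightarrow> bool" where
  "is_problem \<Sigma> \<Pi> \<longleftrightarrow> (case \<Pi> of (\<iota>, \<tau>, \<beta>) \<Rightarrow>
      cfm \<Sigma> \<iota> \<and> cfm \<Sigma> \<beta> \<and> closed \<tau> \<and> over2 \<Sigma> \<tau>)"

datatype rule = RInd | RCons | RInc | RRev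

definition sysF :: "rule set" where "sysF = {RInd, RCons}"
definition sysFI :: "rule set" where "sysFI = {RInd, RCons, RInc}"
definition sysFBI :: "rule set" where "sysFBI = {RInd, RCons, RInc, RRev}"

text \<open>derivable Rs \<Sigma> P \<Pi> k: there is a proof tree of \<Pi> (over vocabulary \<Sigma>)
in the system with rule set Rs, with (Ind) restricted to \<phi> \<in> P, using exactly
k applications of (Ind).\<close>

inductive derivable :: "rule set \<Rightarrow> vocab \<Rightarrow> fm set \<Rightarrow> prob \<Rightarrow> nat \<Rightarrow> bool"
  for Rs :: "rule set" and \<Sigma> :: vocab and P :: "fm set" where
  ind: "\<lbrakk> RInd \<in> Rs; \<phi> \<in> P; cfm \<Sigma> \<phi>; is_problem \<Sigma> (\<iota>, \<tau>, Not \<phi>);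
          entails \<iota> \<phi>; entails (And \<phi> \<tau>) (prime \<phi>) \<rbrakk>
        \<Longrightarrow> derivable Rs \<Sigma> P (\<iota>, \<tau>, Not \<phi>) 1"
| cons: "\<lbrakk> RCons \<in> Rs; cfm \<Sigma> \<phi>; is_problem \<Sigma> (\<iota>, \<tau>, \<beta>);
          derivable Rs \<Sigma> P (\<iota>, \<tau>, Not \<phi>) k; entails \<phi> (Not \<beta>) \<rbrakk>
        \<Longrightarrow> derivable Rs \<Sigma> P (\<iota>, \<tau>, \<beta>) k"
| inc: "\<lbrakk> RInc \<in> Rs; cfm \<Sigma> \<phi>; is_problem \<Sigma> (\<iota>, \<tau>, \<beta>);
          derivable Rs \<Sigma> P (\<iota>, \<tau>, Not \<phi>) k1;
          derivable Rs \<Sigma> P (And \<iota> \<phi>, And \<tau> (And \<phi> (prime \<phi>)), And \<beta> \<phi>) k2 \<rbrakk>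
        \<Longrightarrow> derivable Rs \<Sigma> P (\<iota>, \<tau>, \<beta>) (k1 + k2)"
| rev: "\<lbrakk> RRev \<in> Rs; is_problem \<Sigma> (\<iota>, \<tau>, \<beta>);
          derivable Rs \<Sigma> P (\<beta>, swap \<tau>, \<iota>) k \<rbrakk>
        \<Longrightarrow> derivable Rs \<Sigma> P (\<iota>, \<tau>, \<beta>) k"

definition provable :: "rule set \<Rightarrow> vocab \<Rightarrow> fm set \<Rightarrow> prob \<Rightarrow> bool" where
  "provable Rs \<Sigma> P \<Pi> \<longleftrightarrow> (\<exists>k. derivable Rs \<Sigma> P \<Pi> k)"

definition provable_n :: "rule set \<Rightarrow> vocab \<Rightarrow> fm set \<Rightarrow> nat \<Rightarrow> prob \<Rightarrow> bool" where
  "provable_n Rs \<Sigma> P n \<Pi> \<longleftrightarrow> (\<exists>k\<le>n. derivable Rs \<Sigma> P \<Pi> k)"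

inductive bool_comb :: "fm set \<Rightarrow> fm \<Rightarrow> bool" for S where
  atom: "p \<in> S \<Longrightarrow> bool_comb S p"
| tt: "bool_comb S FTrue"
| ff: "bool_comb S FFalse"
| neg: "bool_comb S p \<Longrightarrow> bool_comb S (Not p)"
| conj: "bool_comb S p \<Longrightarrow> bool_comb S q \<Longrightarrow> bool_comb S (And p q)"
| disj: "bool_comb S p \<Longrightarrow> bool_comb S q \<Longrightarrow> bool_comb S (Or p q)"
| imp: "bool_comb S p \<Longrightarrow> bool_comb S q \<Longrightarrow> bool_comb S (Imp p q)"
| iff: "bool_comb S p \<Longrightarrow> bool_comb S q \<Longrightarrow> bool_comb S (Iff p q)"

definition Pn :: "fm set \<Rightarrow> nat \<Rightarrow> fm set" where
  "Pn P n = {p. \<exists>S. S \<subseteq> P \<and> finite S \<and> card S \<le> n \<and> bool_comb S p}"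

end

theory Submission
  imports Defs
begin

text \<open>
  Let a proof use (Ind) at most \<open>n\<close> times, with the predicates \<open>\<Phi> \<subseteq> \<P>\<close>. Every rule
  stays sound if reachability is replaced by reachability in the predicate abstraction
  over \<open>\<Phi>\<close>, where two states are identified when they agree on \<open>\<Phi>\<close>; for (Rev) this is
  because a backward abstract run from \<open>\<beta>\<close> can follow any forward abstract run from \<open>\<iota>\<close>
  in reverse. The abstractly reachable states are a union of \<open>\<Phi>\<close>-types, hence defined by
  a Boolean combination of \<open>\<Phi>\<close>, and this formula is an inductive invariant excluding \<open>\<beta>\<close>:
  a single (Ind) over \<open>\<P>\<^sub>n\<close> followed by (Cons).

  For the lower bound take nullary predicates \<open>p\<^sub>0, \<dots>, p\<^sub>n\<^sub>-\<^sub>1\<close>, the empty transition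
  relation, \<open>\<iota> = \<And>\<^sub>j \<not> p\<^sub>j\<close> and \<open>\<beta> = \<Or>\<^sub>j p\<^sub>j\<close>. Each \<open>p\<^sub>j\<close> is a backward invariant, and (Inc)
  chains the \<open>n\<close> backward proofs together. A proof with fewer (Ind) misses some \<open>p\<^sub>i\<close>, and
  its abstraction cannot tell the initial state with no \<open>p\<^sub>j\<close> from the bad state where
  only \<open>p\<^sub>i\<close> holds. Without (Rev) the leftmost (Ind) needs \<open>\<iota> \<Rightarrow> p\<^sub>j\<close>, which fails.
\<close>

definition rename_struc :: "(bool \<Rightarrow> bool) \<Rightarrow> struc \<Rightarrow> struc" where
  "rename_struc g M = Struc (dom M) (\<lambda>(s, b). funs M (s, g b)) (\<lambda>(s, b). rels M (s, g b))"

lemma rename_struc_sel [simp]: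
  "dom (rename_struc g M) = dom M"
  "funs (rename_struc g M) (s, b) = funs M (s, g b)"
  "rels (rename_struc g M) (s, b) = rels M (s, g b)"
  by (simp_all add: rename_struc_def)

lemma rename_struc_comp [simp]: "rename_struc g (rename_struc h M) = rename_struc (h \<circ> g) M"
  by (simp add: rename_struc_def)

lemma rename_struc_id [simp]: "rename_struc (\<lambda>b. b) M = M"
  by (cases M) (simp add: rename_struc_def)

lemma evalt_map_syms_t: "evalt M v (map_syms_t g t) = evalt (rename_struc g M) v t"
  by (induction g t rule: map_syms_t.induct) (auto cong: map_cong)

lemma sat_map_syms: "sat M v (map_syms g p) = sat (rename_struc g M) v p"
  by (induction g p arbitrary: v rule: map_syms.induct) (auto simp: evalt_map_syms_t cong: map_cong)

text \<open>Formulas over \<open>\<Sigma>\<close> read in \<open>post_state M\<close> what \<open>M\<close> says about the primed symbols.\<close>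

abbreviation post_state :: "struc \<Rightarrow> struc" where
  "post_state \<equiv> rename_struc (\<lambda>_. True)"

lemma sat_prime: "sat M v (prime p) = sat (post_state M) v p"
  by (simp add: prime_def sat_map_syms)

lemma sat_swap: "sat M v (swap p) = sat (rename_struc (\<lambda>b. \<not> b) M) v p"
  by (simp add: swap_def sat_map_syms)

lemma map_syms_t_False: "trm_over (A \<times> {False}) t \<Longrightarrow> map_syms_t (\<lambda>_. False) t = t"
  by (induction "\<lambda>_::bool. False" t rule: map_syms_t.induct) (auto simp: map_idI)

lemma map_syms_False: "fm_over (A \<times> {False}) (B \<times> {False}) p \<Longrightarrow> map_syms (\<lambda>_. False) p = p"
  by (induction "\<lambda>_::bool. False" p rule: map_syms.induct) (auto intro!: map_idI map_syms_t_False)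

lemma cfm_map_syms_False: "cfm \<Sigma> p \<Longrightarrow> map_syms (\<lambda>_. False) p = p"
  unfolding cfm_def over_def unprimed_def using map_syms_False by blast

lemma sat_cfm_cong:
  "cfm \<Sigma> p \<Longrightarrow> rename_struc (\<lambda>_. False) M = rename_struc (\<lambda>_. False) N \<Longrightarrow> sat M v p = sat N v p"
  by (metis cfm_map_syms_False sat_map_syms)

lemma closed_map_syms [simp]: "closed (map_syms g p) = closed p"
proof -
  have "fvt (map_syms_t g t) = fvt t" for t
    by (induction g t rule: map_syms_t.induct) auto
  then have "fv (map_syms g p) = fv p"
    by (induction g p rule: map_syms.induct) auto
  then show ?thesis by (simp add: closed_def)
qed

lemma trm_over_map_syms_t:
  "trm_over A t \<Longrightarrow> \<forall>s b. (s, b) \<in> A \<longrightarrow> (s, g b) \<in> A' \<Longrightarrow> trm_over A' (map_syms_t g t)"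
  by (induction g t rule: map_syms_t.induct) auto

lemma fm_over_map_syms:
  "fm_over A B p \<Longrightarrow> \<forall>s b. (s, b) \<in> A \<longrightarrow> (s, g b) \<in> A' \<Longrightarrow>
    \<forall>s b. (s, b) \<in> B \<longrightarrow> (s, g b) \<in> B' \<Longrightarrow> fm_over A' B' (map_syms g p)"
  by (induction g p rule: map_syms.induct) (auto simp: trm_over_map_syms_t)

lemma over2_map_syms: "over2 \<Sigma> p \<Longrightarrow> over2 \<Sigma> (map_syms g p)"
  unfolding over2_def both_def by (erule fm_over_map_syms) auto

lemma over_imp_over2_map_syms: "over \<Sigma> p \<Longrightarrow> over2 \<Sigma> (map_syms g p)"
  unfolding over2_def over_def both_def unprimed_def by (erule fm_over_map_syms) auto

lemma cfm_simps [simp]: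
  "cfm \<Sigma> FTrue" "cfm \<Sigma> FFalse" "cfm \<Sigma> (Not p) \<longleftrightarrow> cfm \<Sigma> p"
  "cfm \<Sigma> (And p q) \<longleftrightarrow> cfm \<Sigma> p \<and> cfm \<Sigma> q" "cfm \<Sigma> (Or p q) \<longleftrightarrow> cfm \<Sigma> p \<and> cfm \<Sigma> q"
  by (auto simp: cfm_def closed_def over_def)

lemma cfm_bool_comb: "bool_comb S p \<Longrightarrow> \<forall>q\<in>S. cfm \<Sigma> q \<Longrightarrow> cfm \<Sigma> p"
  by (induction rule: bool_comb.induct) (auto simp: cfm_def closed_def over_def)

lemma is_problem_iff:
  "is_problem \<Sigma> (\<iota>, \<tau>, \<beta>) \<longleftrightarrow> cfm \<Sigma> \<iota> \<and> cfm \<Sigma> \<beta> \<and> closed \<tau> \<and> over2 \<Sigma> \<tau>"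
  by (simp add: is_problem_def)

lemma is_problem_swap:
  "is_problem \<Sigma> (\<iota>, \<tau>, \<beta>) \<Longrightarrow> cfm \<Sigma> \<iota>' \<Longrightarrow> cfm \<Sigma> \<beta>' \<Longrightarrow> is_problem \<Sigma> (\<iota>', swap \<tau>, \<beta>')"
  by (simp add: is_problem_iff swap_def over2_map_syms)

lemma is_problem_inc_premise:
  assumes "is_problem \<Sigma> (\<iota>, \<tau>, \<beta>)" "cfm \<Sigma> \<phi>"
  shows "is_problem \<Sigma> (And \<iota> \<phi>, And \<tau> (And \<phi> (prime \<phi>)), And \<beta> \<phi>)"
proof -
  have "over2 \<Sigma> (map_syms g \<phi>)" "closed (map_syms g \<phi>)" for g
    using assms(2) by (simp_all add: cfm_def over_imp_over2_map_syms)
  then have "over2 \<Sigma> \<phi>" "over2 \<Sigma> (prime \<phi>)" "closed (prime \<phi>)"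
    unfolding prime_def by (metis cfm_map_syms_False[OF assms(2)])+
  then show ?thesis
    using assms by (simp add: is_problem_iff over2_def closed_def prime_def cfm_def[of _ \<phi>])
qed

lemma derivable_is_problem: "derivable Rs \<Sigma> P \<Pi> k \<Longrightarrow> is_problem \<Sigma> \<Pi>"
  by (induction rule: derivable.induct) auto

section \<open>Soundness for predicate abstraction\<close>

definition is_state :: "struc \<Rightarrow> (nat \<Rightarrow> nat) \<Rightarrow> bool" where
  "is_state M v \<longleftrightarrow> is_struc M \<and> range v \<subseteq> dom M"

lemma is_state_rename_struc: "is_state M v \<Longrightarrow> is_state (rename_struc g M) v"
  unfolding is_state_def is_struc_def by (auto simp: rename_struc_def split: prod.splits)

lemma entailsD: "entails A B \<Longrightarrow> is_state M v \<Longrightarrow> sat M v A \<Longrightarrow> sat M v B"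
  by (simp add: entails_def valid_def is_state_def)

lemma entailsI: "(\<And>M v. is_state M v \<Longrightarrow> sat M v A \<Longrightarrow> sat M v B) \<Longrightarrow> entails A B"
  by (simp add: entails_def valid_def is_state_def)

text \<open>Concretisation of the reachable states of the predicate abstraction over \<open>\<Phi>\<close>.\<close>

inductive abs_reach :: "fm set \<Rightarrow> fm \<Rightarrow> fm \<Rightarrow> struc \<Rightarrow> (nat \<Rightarrow> nat) \<Rightarrow> bool"
  for \<Phi> \<iota> \<tau> where
  init: "is_state M v \<Longrightarrow> sat M v \<iota> \<Longrightarrow> abs_reach \<Phi> \<iota> \<tau> M v"
| step: "abs_reach \<Phi> \<iota> \<tau> M v \<Longrightarrow> sat M v \<tau> \<Longrightarrow> abs_reach \<Phi> \<iota> \<tau> (post_state M) v"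
| jump: "abs_reach \<Phi> \<iota> \<tau> M v \<Longrightarrow> is_state N w \<Longrightarrow> \<forall>\<phi>\<in>\<Phi>. sat M v \<phi> = sat N w \<phi> \<Longrightarrow>
    abs_reach \<Phi> \<iota> \<tau> N w"

lemma abs_reach_is_state: "abs_reach \<Phi> \<iota> \<tau> M v \<Longrightarrow> is_state M v"
  by (induction rule: abs_reach.induct) (auto simp: is_state_rename_struc)

lemma abs_reach_antimono: "abs_reach \<Phi> \<iota> \<tau> M v \<Longrightarrow> \<Phi>' \<subseteq> \<Phi> \<Longrightarrow> abs_reach \<Phi>' \<iota> \<tau> M v"
proof (induction rule: abs_reach.induct)
  case (init M v)
  then show ?case by (simp add: abs_reach.init)
next
  case (step M v)
  then show ?case by (simp add: abs_reach.step)
next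
  case (jump M v N w)
  then show ?case by (meson abs_reach.jump subsetD)
qed

lemma abs_reach_unprimed_cong:
  assumes "\<forall>\<phi>\<in>\<Phi>. cfm \<Sigma> \<phi>" "abs_reach \<Phi> \<iota> \<tau> M v" "is_state N v"
    and "rename_struc (\<lambda>_. False) M = rename_struc (\<lambda>_. False) N"
  shows "abs_reach \<Phi> \<iota> \<tau> N v"
proof (rule abs_reach.jump[OF assms(2,3)])
  show "\<forall>\<phi>\<in>\<Phi>. sat M v \<phi> = sat N v \<phi>"
    using assms(1,4) sat_cfm_cong by blast
qed

definition abs_safe :: "fm set \<Rightarrow> prob \<Rightarrow> bool" where
  "abs_safe \<Phi> \<Pi> \<longleftrightarrow> (case \<Pi> of (\<iota>, \<tau>, \<beta>) \<Rightarrow> \<forall>M v. abs_reach \<Phi> \<iota> \<tau> M v \<longrightarrow> \<not> sat M v \<beta>)"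

lemma abs_safeD: "abs_safe \<Phi> (\<iota>, \<tau>, \<beta>) \<Longrightarrow> abs_reach \<Phi> \<iota> \<tau> M v \<Longrightarrow> \<not> sat M v \<beta>"
  by (simp add: abs_safe_def)

lemma abs_safe_ind:
  assumes "\<phi> \<in> \<Phi>" "entails \<iota> \<phi>" "entails (And \<phi> \<tau>) (prime \<phi>)"
  shows "abs_safe \<Phi> (\<iota>, \<tau>, Not \<phi>)"
proof -
  have "abs_reach \<Phi> \<iota> \<tau> M v \<Longrightarrow> sat M v \<phi>" for M v
  proof (induction rule: abs_reach.induct)
    case (init M v)
    then show ?case using assms(2) entailsD by blast
  next
    case (step M v)
    then have "sat M v (prime \<phi>)" using assms(3) entailsD abs_reach_is_state by fastforce
    then show ?case by (simp add: sat_prime)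
  next
    case (jump M v N w)
    then show ?case using assms(1) by blast
  qed
  then show ?thesis unfolding abs_safe_def by auto
qed

lemma abs_safe_cons:
  "abs_safe \<Phi> (\<iota>, \<tau>, Not \<phi>) \<Longrightarrow> entails \<phi> (Not \<beta>) \<Longrightarrow> abs_safe \<Phi> (\<iota>, \<tau>, \<beta>)"
  unfolding abs_safe_def by (auto dest: abs_reach_is_state entailsD)

lemma abs_safe_inc:
  assumes "abs_safe \<Phi>\<^sub>1 (\<iota>, \<tau>, Not \<phi>)"
    and "abs_safe \<Phi>\<^sub>2 (And \<iota> \<phi>, And \<tau> (And \<phi> (prime \<phi>)), And \<beta> \<phi>)"
  shows "abs_safe (\<Phi>\<^sub>1 \<union> \<Phi>\<^sub>2) (\<iota>, \<tau>, \<beta>)"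
proof -
  have \<phi>: "sat M v \<phi>" if "abs_reach (\<Phi>\<^sub>1 \<union> \<Phi>\<^sub>2) \<iota> \<tau> M v" for M v
    using assms(1) abs_reach_antimono[OF that] unfolding abs_safe_def by auto
  have "abs_reach (\<Phi>\<^sub>1 \<union> \<Phi>\<^sub>2) \<iota> \<tau> M v \<Longrightarrow>
      abs_reach \<Phi>\<^sub>2 (And \<iota> \<phi>) (And \<tau> (And \<phi> (prime \<phi>))) M v" for M v
  proof (induction rule: abs_reach.induct)
    case (init M v)
    then show ?case by (simp add: \<phi> abs_reach.init)
  next
    case (step M v)
    have "sat M v \<phi>" "sat M v (prime \<phi>)"
      using \<phi> step.hyps abs_reach.step[OF step.hyps] by (auto simp: sat_prime)
    then show ?case using step abs_reach.step by fastforce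
  next
    case (jump M v N w)
    then show ?case by (meson abs_reach.jump UnCI)
  qed
  then show ?thesis using assms(2) \<phi> unfolding abs_safe_def by fastforce
qed

text \<open>
  A backward abstract run can retrace a forward one: if \<open>post_state M\<close> is backward
  reachable, so is \<open>M\<close>, because swapping the primed and unprimed symbols of \<open>M\<close> gives
  a state that agrees with \<open>post_state M\<close> on \<open>\<Sigma>\<close> and has a \<open>\<tau>\<^sup>-\<^sup>1\<close>-successor agreeing
  with \<open>M\<close> on \<open>\<Sigma>\<close>.
\<close>

lemma abs_reach_backward_meets_init:
  assumes cfm: "\<forall>\<phi>\<in>\<Phi>. cfm \<Sigma> \<phi>"
  shows "abs_reach \<Phi> \<iota> \<tau> M v \<Longrightarrow> abs_reach \<Phi> \<beta> (swap \<tau>) M v \<Longrightarrow>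
    \<exists>N w. abs_reach \<Phi> \<beta> (swap \<tau>) N w \<and> sat N w \<iota>"
proof (induction rule: abs_reach.induct)
  case (init M v)
  then show ?case by blast
next
  case (step M v)
  let ?S = "rename_struc (\<lambda>b. \<not> b) M"
  have M: "is_state M v" using step.hyps(1) by (rule abs_reach_is_state)
  have "abs_reach \<Phi> \<beta> (swap \<tau>) ?S v"
    by (rule abs_reach_unprimed_cong[OF cfm step.prems])
      (simp_all add: comp_def is_state_rename_struc M)
  moreover have "sat ?S v (swap \<tau>)"
    using step.hyps(2) by (simp add: sat_swap comp_def)
  ultimately have "abs_reach \<Phi> \<beta> (swap \<tau>) (post_state ?S) v"
    by (rule abs_reach.step)
  then have "abs_reach \<Phi> \<beta> (swap \<tau>) M v"
    by (rule abs_reach_unprimed_cong[OF cfm _ M]) (simp add: comp_def)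
  then show ?case by (rule step.IH)
next
  case (jump M v N w)
  have "abs_reach \<Phi> \<beta> (swap \<tau>) M v"
    using abs_reach.jump[OF jump.prems abs_reach_is_state[OF jump.hyps(1)]] jump.hyps(3) by auto
  then show ?case by (rule jump.IH)
qed

lemma abs_safe_rev:
  assumes "\<forall>\<phi>\<in>\<Phi>. cfm \<Sigma> \<phi>" "abs_safe \<Phi> (\<beta>, swap \<tau>, \<iota>)"
  shows "abs_safe \<Phi> (\<iota>, \<tau>, \<beta>)"
proof -
  have False if M: "abs_reach \<Phi> \<iota> \<tau> M v" "sat M v \<beta>" for M v
  proof -
    have "abs_reach \<Phi> \<beta> (swap \<tau>) M v"
      using abs_reach.init[OF abs_reach_is_state[OF M(1)] M(2)] .
    then show False
      using abs_reach_backward_meets_init[OF assms(1) M(1)] abs_safeD[OF assms(2)] by blast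
  qed
  then show ?thesis
    unfolding abs_safe_def by auto
qed

lemma derivable_abs_safe:
  "derivable Rs \<Sigma> P \<Pi> k \<Longrightarrow>
    \<exists>\<Phi>\<subseteq>P. finite \<Phi> \<and> card \<Phi> \<le> k \<and> (\<forall>\<phi>\<in>\<Phi>. cfm \<Sigma> \<phi>) \<and> abs_safe \<Phi> \<Pi>"
proof (induction rule: derivable.induct)
  case (ind \<phi> \<iota> \<tau>)
  then have "abs_safe {\<phi>} (\<iota>, \<tau>, Not \<phi>)" by (simp add: abs_safe_ind)
  with ind.hyps show ?case by (intro exI[of _ "{\<phi>}"]) simp
next
  case (cons \<phi> \<iota> \<tau> \<beta> k)
  then show ?case using abs_safe_cons by meson
next
  case (inc \<phi> \<iota> \<tau> \<beta> k\<^sub>1 k\<^sub>2)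
  obtain \<Phi>\<^sub>1 where \<Phi>\<^sub>1: "\<Phi>\<^sub>1 \<subseteq> P" "finite \<Phi>\<^sub>1" "card \<Phi>\<^sub>1 \<le> k\<^sub>1" "\<forall>\<phi>\<in>\<Phi>\<^sub>1. cfm \<Sigma> \<phi>"
    "abs_safe \<Phi>\<^sub>1 (\<iota>, \<tau>, Not \<phi>)"
    using inc.IH(1) by blast
  obtain \<Phi>\<^sub>2 where \<Phi>\<^sub>2: "\<Phi>\<^sub>2 \<subseteq> P" "finite \<Phi>\<^sub>2" "card \<Phi>\<^sub>2 \<le> k\<^sub>2" "\<forall>\<phi>\<in>\<Phi>\<^sub>2. cfm \<Sigma> \<phi>"
    "abs_safe \<Phi>\<^sub>2 (And \<iota> \<phi>, And \<tau> (And \<phi> (prime \<phi>)), And \<beta> \<phi>)"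
    using inc.IH(2) by blast
  have "card (\<Phi>\<^sub>1 \<union> \<Phi>\<^sub>2) \<le> k\<^sub>1 + k\<^sub>2"
    using card_Un_le[of \<Phi>\<^sub>1 \<Phi>\<^sub>2] \<Phi>\<^sub>1(3) \<Phi>\<^sub>2(3) by linarith
  moreover have "abs_safe (\<Phi>\<^sub>1 \<union> \<Phi>\<^sub>2) (\<iota>, \<tau>, \<beta>)"
    using \<Phi>\<^sub>1(5) \<Phi>\<^sub>2(5) by (rule abs_safe_inc)
  ultimately show ?case
    using \<Phi>\<^sub>1 \<Phi>\<^sub>2 by (intro exI[of _ "\<Phi>\<^sub>1 \<union> \<Phi>\<^sub>2"]) auto
next
  case (rev \<iota> \<tau> \<beta> k)
  then show ?case using abs_safe_rev by meson
qed

section \<open>Invariants that are Boolean combinations\<close>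

fun Ands :: "fm list \<Rightarrow> fm" where
  "Ands [] = FTrue"
| "Ands (p # ps) = And p (Ands ps)"

fun Ors :: "fm list \<Rightarrow> fm" where
  "Ors [] = FFalse"
| "Ors (p # ps) = Or p (Ors ps)"

lemma sat_Ands [simp]: "sat M v (Ands ps) \<longleftrightarrow> (\<forall>p\<in>set ps. sat M v p)"
  by (induction ps) auto

lemma sat_Ors [simp]: "sat M v (Ors ps) \<longleftrightarrow> (\<exists>p\<in>set ps. sat M v p)"
  by (induction ps) auto

lemma cfm_Ands [simp]: "cfm \<Sigma> (Ands ps) \<longleftrightarrow> (\<forall>p\<in>set ps. cfm \<Sigma> p)"
  by (induction ps) auto

lemma cfm_Ors [simp]: "cfm \<Sigma> (Ors ps) \<longleftrightarrow> (\<forall>p\<in>set ps. cfm \<Sigma> p)"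
  by (induction ps) auto

lemma bool_comb_Ands: "\<forall>p\<in>set ps. bool_comb S p \<Longrightarrow> bool_comb S (Ands ps)"
  by (induction ps) (auto intro: bool_comb.intros)

lemma bool_comb_Ors: "\<forall>p\<in>set ps. bool_comb S p \<Longrightarrow> bool_comb S (Ors ps)"
  by (induction ps) (auto intro: bool_comb.intros)

text \<open>The defining formula is the disjunction of the \<open>\<Phi>\<close>-types realised in \<open>X\<close>.\<close>

lemma bool_comb_defines_invariant_set:
  assumes "finite \<Phi>"
    and invariant: "\<And>M v N w. X M v \<Longrightarrow> is_state N w \<Longrightarrow> \<forall>\<phi>\<in>\<Phi>. sat M v \<phi> = sat N w \<phi> \<Longrightarrow> X N w"
  obtains \<psi> where "bool_comb \<Phi> \<psi>" "\<And>M v. is_state M v \<Longrightarrow> sat M v \<psi> \<longleftrightarrow> X M v"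
proof -
  obtain xs where xs: "set xs = \<Phi>"
    using assms(1) finite_list by blast
  define type where "type M v = {\<phi>\<in>\<Phi>. sat M v \<phi>}" for M v
  define types where "types = {type M v | M v. X M v}"
  have "types \<subseteq> Pow \<Phi>"
    by (auto simp: types_def type_def)
  then have "finite types"
    using assms(1) by (simp add: finite_subset)
  then obtain ys where ys: "set ys = types"
    using finite_list by blast
  define literal where "literal S \<phi> = (if \<phi> \<in> S then \<phi> else Not \<phi>)" for S \<phi>
  define cube where "cube S = Ands (map (literal S) xs)" for S
  have sat_cube_type:
    "sat M v (cube (type N w)) \<longleftrightarrow> (\<forall>\<phi>\<in>\<Phi>. sat M v \<phi> = sat N w \<phi>)" for M v N w
  proof -
    have "sat M v (literal (type N w) \<phi>) \<longleftrightarrow> (sat M v \<phi> = sat N w \<phi>)" if "\<phi> \<in> \<Phi>" for \<phi>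
      using that by (simp add: literal_def type_def)
    then show ?thesis by (simp add: cube_def xs)
  qed
  show thesis
  proof
    have "bool_comb \<Phi> (literal S \<phi>)" if "\<phi> \<in> \<Phi>" for \<phi> S
      using that by (simp add: literal_def bool_comb.atom bool_comb.neg)
    then show "bool_comb \<Phi> (Ors (map cube ys))"
      by (simp add: cube_def xs bool_comb_Ors bool_comb_Ands)
  next
    fix M v assume M: "is_state M v"
    show "sat M v (Ors (map cube ys)) \<longleftrightarrow> X M v"
    proof
      assume "sat M v (Ors (map cube ys))"
      then obtain N w where "X N w" "\<forall>\<phi>\<in>\<Phi>. sat M v \<phi> = sat N w \<phi>"
        by (auto simp: ys types_def sat_cube_type)
      then show "X M v"
        using invariant[OF \<open>X N w\<close> M] by simp
    next
      assume "X M v"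
      then show "sat M v (Ors (map cube ys))"
        using sat_cube_type[of M v M v] by (auto simp: ys types_def)
    qed
  qed
qed

lemma abs_safe_imp_derivable_F:
  assumes "finite \<Phi>" "\<forall>\<phi>\<in>\<Phi>. cfm \<Sigma> \<phi>" "abs_safe \<Phi> (\<iota>, \<tau>, \<beta>)" "is_problem \<Sigma> (\<iota>, \<tau>, \<beta>)"
    and "Collect (bool_comb \<Phi>) \<subseteq> Q"
  shows "derivable sysF \<Sigma> Q (\<iota>, \<tau>, \<beta>) 1"
proof -
  obtain \<psi> where \<psi>: "bool_comb \<Phi> \<psi>"
    and sat_\<psi>: "\<And>M v. is_state M v \<Longrightarrow> sat M v \<psi> \<longleftrightarrow> abs_reach \<Phi> \<iota> \<tau> M v"
  proof (rule bool_comb_defines_invariant_set[OF assms(1), where X = "abs_reach \<Phi> \<iota> \<tau>"])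
    show "abs_reach \<Phi> \<iota> \<tau> N w"
      if "abs_reach \<Phi> \<iota> \<tau> M v" "is_state N w" "\<forall>\<phi>\<in>\<Phi>. sat M v \<phi> = sat N w \<phi>" for M v N w
      using that by (rule abs_reach.jump)
  qed (rule that)
  have cfm_\<psi>: "cfm \<Sigma> \<psi>"
    using cfm_bool_comb[OF \<psi> assms(2)] .
  have init: "entails \<iota> \<psi>"
    by (rule entailsI) (simp add: sat_\<psi> abs_reach.init)
  have step: "entails (And \<psi> \<tau>) (prime \<psi>)"
  proof (rule entailsI)
    fix M v assume M: "is_state M v" "sat M v (And \<psi> \<tau>)"
    then have "abs_reach \<Phi> \<iota> \<tau> (post_state M) v"
      using sat_\<psi> abs_reach.step by auto
    then show "sat M v (prime \<psi>)"
      using sat_\<psi>[OF is_state_rename_struc[OF M(1)]] by (simp add: sat_prime)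
  qed
  have safe: "entails \<psi> (Not \<beta>)"
    using abs_safeD[OF assms(3)] by (intro entailsI) (simp add: sat_\<psi>)
  have problem: "is_problem \<Sigma> (\<iota>, \<tau>, Not \<psi>)"
    using assms(4) cfm_\<psi> by (simp add: is_problem_iff)
  have "derivable sysF \<Sigma> Q (\<iota>, \<tau>, Not \<psi>) 1"
    by (rule derivable.ind[OF _ _ cfm_\<psi> problem init step]) (use \<psi> assms(5) in \<open>auto simp: sysF_def\<close>)
  then show ?thesis
    by (intro derivable.cons[OF _ cfm_\<psi> assms(4) _ safe]) (simp add: sysF_def)
qed

theorem provable_n_imp_provable_F_Pn:
  assumes "provable_n Rs \<Sigma> P n \<Pi>"
  shows "provable sysF \<Sigma> (Pn P n) \<Pi>"
proof -
  obtain k where "k \<le> n" and d: "derivable Rs \<Sigma> P \<Pi> k"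
    using assms unfolding provable_n_def by blast
  then obtain \<Phi> where \<Phi>: "\<Phi> \<subseteq> P" "finite \<Phi>" "card \<Phi> \<le> n" "\<forall>\<phi>\<in>\<Phi>. cfm \<Sigma> \<phi>" "abs_safe \<Phi> \<Pi>"
    using derivable_abs_safe[OF d] by fastforce
  have "Collect (bool_comb \<Phi>) \<subseteq> Pn P n"
    using \<Phi> unfolding Pn_def by blast
  moreover obtain \<iota> \<tau> \<beta> where "\<Pi> = (\<iota>, \<tau>, \<beta>)"
    by (cases \<Pi>)
  ultimately show ?thesis
    using abs_safe_imp_derivable_F[OF \<Phi>(2,4)] \<Phi>(5) derivable_is_problem[OF d]
    unfolding provable_def by metis
qed

section \<open>The lower bound\<close>

lemma derivable_backward_ind:
  assumes "{RInd, RCons, RRev} \<subseteq> Rs" "q \<in> P" "cfm \<Sigma> q" "is_problem \<Sigma> (\<iota>, \<tau>, \<beta>)"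
    and "entails \<beta> q" "entails (And q (swap \<tau>)) (prime q)" "entails q (Not \<iota>)"
  shows "derivable Rs \<Sigma> P (\<iota>, \<tau>, \<beta>) 1"
proof -
  have cfm: "cfm \<Sigma> \<iota>" "cfm \<Sigma> \<beta>"
    using assms(4) by (simp_all add: is_problem_iff)
  have problem_ind: "is_problem \<Sigma> (\<beta>, swap \<tau>, Not q)"
    using is_problem_swap[OF assms(4) cfm(2)] assms(3) by simp
  have problem_cons: "is_problem \<Sigma> (\<beta>, swap \<tau>, \<iota>)"
    using is_problem_swap[OF assms(4) cfm(2,1)] .
  have "derivable Rs \<Sigma> P (\<beta>, swap \<tau>, Not q) 1"
    by (rule derivable.ind[OF _ assms(2,3) problem_ind assms(5,6)]) (use assms(1) in auto)
  then have "derivable Rs \<Sigma> P (\<beta>, swap \<tau>, \<iota>) 1"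
    by (intro derivable.cons[OF _ assms(3) problem_cons _ assms(7)]) (use assms(1) in auto)
  then show ?thesis
    by (intro derivable.rev[OF _ assms(4)]) (use assms(1) in auto)
qed

text \<open>
  Each \<open>q j\<close> is used as a backward invariant; (Inc) with \<open>\<not> q m\<close> removes the bad
  states satisfying \<open>q m\<close> and leaves the problem for \<open>q 0, \<dots>, q (m - 1)\<close>.
\<close>

lemma derivable_backward_ind_chain:
  assumes "\<And>j. j \<le> m \<Longrightarrow> q j \<in> P \<and> cfm \<Sigma> (q j)" "is_problem \<Sigma> (\<iota>, \<tau>, \<beta>)"
    and "\<And>M v. \<not> sat M v \<tau>"
    and "\<And>M v. is_state M v \<Longrightarrow> sat M v \<beta> \<Longrightarrow> \<exists>j\<le>m. sat M v (q j)"
    and "\<And>j. j \<le> m \<Longrightarrow> entails \<iota> (Not (q j))"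
  shows "derivable sysFBI \<Sigma> P (\<iota>, \<tau>, \<beta>) (Suc m)"
  using assms
proof (induction m arbitrary: \<iota> \<tau> \<beta>)
  case 0
  have "derivable sysFBI \<Sigma> P (\<iota>, \<tau>, \<beta>) 1"
  proof (rule derivable_backward_ind[where q = "q 0"])
    show "entails \<beta> (q 0)"
      using "0.prems"(4) by (auto intro: entailsI)
    show "entails (And (q 0) (swap \<tau>)) (prime (q 0))"
      using "0.prems"(3) by (auto intro: entailsI simp: sat_swap)
    show "entails (q 0) (Not \<iota>)"
      using "0.prems"(5)[of 0] by (auto intro!: entailsI dest: entailsD)
  qed (use "0.prems"(1,2) in \<open>auto simp: sysFBI_def\<close>)
  then show ?case
    by simp
next
  case (Suc m)
  let ?\<phi> = "Not (q (Suc m))"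
  have q: "q (Suc m) \<in> P" "cfm \<Sigma> (q (Suc m))"
    using Suc.prems(1) by auto
  have "derivable sysFBI \<Sigma> P (\<iota>, \<tau>, Not ?\<phi>) 1"
  proof (rule derivable_backward_ind[where q = "q (Suc m)"])
    show "entails (And (q (Suc m)) (swap \<tau>)) (prime (q (Suc m)))"
      using Suc.prems(3) by (auto intro: entailsI simp: sat_swap)
    show "entails (q (Suc m)) (Not \<iota>)"
      using Suc.prems(5)[of "Suc m"] by (auto intro!: entailsI dest: entailsD)
  qed (use Suc.prems(2) q in \<open>auto intro: entailsI simp: sysFBI_def is_problem_iff\<close>)
  moreover have "derivable sysFBI \<Sigma> P (And \<iota> ?\<phi>, And \<tau> (And ?\<phi> (prime ?\<phi>)), And \<beta> ?\<phi>) (Suc m)"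
  proof (rule Suc.IH)
    show "is_problem \<Sigma> (And \<iota> ?\<phi>, And \<tau> (And ?\<phi> (prime ?\<phi>)), And \<beta> ?\<phi>)"
      using is_problem_inc_premise[OF Suc.prems(2)] q(2) by simp
    show "\<exists>j\<le>m. sat M v (q j)" if "is_state M v" "sat M v (And \<beta> ?\<phi>)" for M v
      using Suc.prems(4)[OF that(1)] that(2) le_Suc_eq by auto
    show "entails (And \<iota> ?\<phi>) (Not (q j))" if "j \<le> m" for j
      using Suc.prems(5)[of j] that by (auto intro!: entailsI dest: entailsD)
  qed (use Suc.prems(1,3) in auto)
  ultimately have "derivable sysFBI \<Sigma> P (\<iota>, \<tau>, \<beta>) (1 + Suc m)"
    using Suc.prems(2) q(2) by (intro derivable.inc) (simp_all add: sysFBI_def)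
  then show ?case
    by simp
qed

lemma derivable_without_rev_init_entails:
  "derivable Rs \<Sigma> P \<Pi> k \<Longrightarrow> RRev \<notin> Rs \<Longrightarrow> \<exists>\<phi>\<in>P. entails (fst \<Pi>) \<phi>"
  by (induction rule: derivable.induct) auto

definition patom :: "nat \<Rightarrow> fm" where
  "patom j = Rel ((j, 0), False) []"

definition prop_vocab :: vocab where
  "prop_vocab = ({}, UNIV)"

definition atom_struc :: "nat set \<Rightarrow> struc" where
  "atom_struc A = Struc {0} (\<lambda>_ _. 0) (\<lambda>r _. fst (fst r) \<in> A)"

lemma cfm_patom [simp]: "cfm prop_vocab (patom j)"
  by (simp add: cfm_def closed_def over_def patom_def prop_vocab_def unprimed_def)

lemma sat_atom_struc_patom [simp]: "sat (atom_struc A) v (patom j) \<longleftrightarrow> j \<in> A"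
  by (simp add: patom_def atom_struc_def)

lemma is_state_atom_struc: "is_state (atom_struc A) (\<lambda>_. 0)"
  by (simp add: is_state_def is_struc_def atom_struc_def)

lemma separating_problem:
  assumes "n > 0"
  defines "P \<equiv> patom ` {..<n}"
    and "\<iota> \<equiv> Ands (map (\<lambda>j. Not (patom j)) [0..<n])"
    and "\<beta> \<equiv> Ors (map patom [0..<n])"
  shows "provable_n sysFBI prop_vocab P n (\<iota>, FFalse, \<beta>)"
    and "\<not> provable_n sysFBI prop_vocab P (n - 1) (\<iota>, FFalse, \<beta>)"
    and "RRev \<notin> Rs \<Longrightarrow> \<not> provable Rs prop_vocab P (\<iota>, FFalse, \<beta>)"
proof -
  obtain m where m: "n = Suc m"
    using assms(1) gr0_implies_Suc by blast
  have below_n: "j \<le> m \<longleftrightarrow> j < n" for j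
    using m by linarith
  have "derivable sysFBI prop_vocab P (\<iota>, FFalse, \<beta>) (Suc m)"
  proof (rule derivable_backward_ind_chain[where q = patom])
    show "patom j \<in> P \<and> cfm prop_vocab (patom j)" if "j \<le> m" for j
      using that by (simp add: P_def below_n)
    show "\<exists>j\<le>m. sat M v (patom j)" if "sat M v \<beta>" for M v
      using that by (auto simp: \<beta>_def below_n)
    show "entails \<iota> (Not (patom j))" if "j \<le> m" for j
      using that by (auto simp: \<iota>_def below_n intro!: entailsI)
    show "is_problem prop_vocab (\<iota>, FFalse, \<beta>)"
      by (simp add: \<iota>_def \<beta>_def is_problem_iff closed_def over2_def)
  qed simp
  then show "provable_n sysFBI prop_vocab P n (\<iota>, FFalse, \<beta>)"
    unfolding provable_n_def m by blast
  have init: "sat (atom_struc {}) (\<lambda>_. 0) \<iota>"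
    by (simp add: \<iota>_def)
  show "\<not> provable_n sysFBI prop_vocab P (n - 1) (\<iota>, FFalse, \<beta>)"
  proof
    assume "provable_n sysFBI prop_vocab P (n - 1) (\<iota>, FFalse, \<beta>)"
    then obtain k where k: "k \<le> n - 1" and d: "derivable sysFBI prop_vocab P (\<iota>, FFalse, \<beta>) k"
      unfolding provable_n_def by blast
    obtain \<Phi> where \<Phi>: "\<Phi> \<subseteq> P" "finite \<Phi>" "card \<Phi> \<le> k" "abs_safe \<Phi> (\<iota>, FFalse, \<beta>)"
      using derivable_abs_safe[OF d] by blast
    have "\<not> P \<subseteq> \<Phi>"
    proof
      assume "P \<subseteq> \<Phi>"
      then have "card P \<le> card \<Phi>"
        by (rule card_mono[OF \<Phi>(2)])
      moreover have "card P = n"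
        unfolding P_def by (simp add: card_image inj_on_def patom_def)
      ultimately show False
        using \<Phi>(3) k assms(1) by linarith
    qed
    then obtain i where i: "i < n" "patom i \<notin> \<Phi>"
      unfolding P_def by blast
    have "\<forall>\<phi>\<in>\<Phi>. sat (atom_struc {}) (\<lambda>_. 0) \<phi> = sat (atom_struc {i}) (\<lambda>_. 0) \<phi>"
    proof
      fix \<phi> assume "\<phi> \<in> \<Phi>"
      then obtain j where "\<phi> = patom j" "j \<noteq> i"
        using \<Phi>(1) i(2) unfolding P_def by blast
      then show "sat (atom_struc {}) (\<lambda>_. 0) \<phi> = sat (atom_struc {i}) (\<lambda>_. 0) \<phi>"
        by simp
    qed
    then have "abs_reach \<Phi> \<iota> FFalse (atom_struc {i}) (\<lambda>_. 0)"
      by (rule abs_reach.jump[OF abs_reach.init[OF is_state_atom_struc init] is_state_atom_struc])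
    then have "\<not> sat (atom_struc {i}) (\<lambda>_. 0) \<beta>"
      by (rule abs_safeD[OF \<Phi>(4)])
    then show False
      using i(1) by (simp add: \<beta>_def)
  qed
  show "\<not> provable Rs prop_vocab P (\<iota>, FFalse, \<beta>)" if no_rev: "RRev \<notin> Rs"
  proof
    assume "provable Rs prop_vocab P (\<iota>, FFalse, \<beta>)"
    then obtain k where d: "derivable Rs prop_vocab P (\<iota>, FFalse, \<beta>) k"
      unfolding provable_def by blast
    obtain \<phi> where "\<phi> \<in> P" "entails \<iota> \<phi>"
      using derivable_without_rev_init_entails[OF d no_rev] by auto
    then show False
      using entailsD[OF _ is_state_atom_struc init] unfolding P_def by force
  qed
qed

theorem theorem4p14:
  shows "(\<forall>\<Sigma> P n \<Pi>. (\<forall>\<phi>\<in>P. closed \<phi>) \<longrightarrow>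
            provable_n sysFBI \<Sigma> P n \<Pi> \<longrightarrow> provable sysF \<Sigma> (Pn P n) \<Pi>)
       \<and> (\<forall>n::nat. n > 0 \<longrightarrow> (\<exists>\<Sigma> P \<Pi>. (\<forall>\<phi>\<in>P. closed \<phi>) \<and>
            provable_n sysFBI \<Sigma> P n \<Pi> \<and>
            \<not> provable_n sysFBI \<Sigma> P (n - 1) \<Pi> \<and>
            \<not> provable sysFI \<Sigma> P \<Pi> \<and>
            \<not> provable sysF \<Sigma> P \<Pi>))"
proof (intro conjI allI impI)
  fix \<Sigma> P n \<Pi>
  assume "provable_n sysFBI \<Sigma> P n \<Pi>"
  then show "provable sysF \<Sigma> (Pn P n) \<Pi>"
    by (rule provable_n_imp_provable_F_Pn)
next
  fix n :: nat
  assume "n > 0"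
  have "\<forall>\<phi>\<in>patom ` {..<n}. closed \<phi>"
    using cfm_patom by (auto simp: cfm_def)
  moreover have "RRev \<notin> sysFI" "RRev \<notin> sysF"
    by (simp_all add: sysFI_def sysF_def)
  ultimately show "\<exists>\<Sigma> P \<Pi>. (\<forall>\<phi>\<in>P. closed \<phi>) \<and>
            provable_n sysFBI \<Sigma> P n \<Pi> \<and>
            \<not> provable_n sysFBI \<Sigma> P (n - 1) \<Pi> \<and>
            \<not> provable sysFI \<Sigma> P \<Pi> \<and>
            \<not> provable sysF \<Sigma> P \<Pi>"
    using separating_problem[OF \<open>n > 0\<close>] by blast
qed

end
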